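(* Let $H$ be a real Hilbert space with inner product $(\cdot,\cdot)_H$ and norm $\|\cdot\|_H$, let $\Phi\in H$, and let $\mathbf{L}(\Phi)=\mathbf{M}(\Phi)+\mathbf{S}(\Phi)$, where $\mathbf{S}(\Phi)$ is a skew-symmetric linear operator on $H$ and $-\mathbf{M}(\Phi)$ is a symmetric positive definite linear operator on $H$. Assume there are positive constants $\alpha_{\mathbf{M}},\beta_{\mathbf{S}}$ such that for all $\Psi_1,\Psi_2,\Psi\in H$, $$(\mathbf{S}(\Phi)\Psi_1,\Psi_2)_H\le\beta_{\mathbf{S}}\|\Psi_1\|_H\|\Psi_2\|_H,\qquad(-\mathbf{M}(\Phi)\Psi,\Psi)_H\ge\alpha_{\mathbf{M}}\|\Psi\|_H^2.$$ Then for all $\Psi_1,\Psi_2\in H$, $$(\mathbf{L}(\Phi)\Psi_1,\Psi_2)_H\le\Big(1+\tfrac{\beta_{\mathbf{S}}}{\alpha_{\mathbf{M}}}\Big)(\Psi_1,-\mathbf{M}(\Phi)\Psi_1)_H^{1/2}(\Psi_2,-\mathbf{M}(\Phi)\Psi_2)_H^{1/2}.$$ *)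

theory Defs
  imports "HOL-Analysis.Analysis"
begin

end

theory Submission
  imports Defs
begin

text \<open>The symmetric part \<open>-M\<close> defines an inner product, so the \<open>M\<close>-term is bounded by the
  Cauchy--Schwarz inequality for it; the skew part is bounded by \<open>\<beta>S\<close> times the norms, and
  coercivity converts each norm into the energy norm at the cost of a factor \<open>1 / sqrt \<alpha>M\<close>.\<close>

lemma Cauchy_Schwarz_ineq_operator:
  fixes A :: "'a::real_inner \<Rightarrow> 'a"
  assumes lin: "linear A" and sym: "\<And>x y. inner (A x) y = inner x (A y)"
    and posdef: "\<And>x. x \<noteq> 0 \<Longrightarrow> inner (A x) x > 0"
  shows "(inner (A x) y)\<^sup>2 \<le> inner (A x) x * inner (A y) y"
proof (cases "y = 0")
  case True
  then show ?thesis using linear_0[OF lin] by simp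
next
  case False
  then have y: "inner (A y) y > 0" by (rule posdef)
  let ?r = "inner (A x) y / inner (A y) y"
  have "0 \<le> inner (A (x - ?r *\<^sub>R y)) (x - ?r *\<^sub>R y)"
    using posdef[of "x - ?r *\<^sub>R y"] by fastforce
  also have "\<dots> = inner (A x) x - ?r * inner (A x) y"
    using y sym[of x y]
    by (simp add: linear_diff[OF lin] linear_scale[OF lin] inner_diff inner_commute)
  also have "\<dots> = inner (A x) x - (inner (A x) y)\<^sup>2 / inner (A y) y"
    by (simp add: power2_eq_square)
  finally show ?thesis by (simp add: pos_divide_le_eq y)
qed

lemma abs_inner_operator_le_sqrt:
  fixes A :: "'a::real_inner \<Rightarrow> 'a"
  assumes "linear A" and "\<And>x y. inner (A x) y = inner x (A y)"
    and "\<And>x. x \<noteq> 0 \<Longrightarrow> inner (A x) x > 0"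
  shows "\<bar>inner (A x) y\<bar> \<le> sqrt (inner (A x) x) * sqrt (inner (A y) y)"
  using Cauchy_Schwarz_ineq_operator[OF assms, of x y]
  by (simp add: real_le_rsqrt flip: real_sqrt_mult)

lemma norm_le_sqrt_coercive:
  assumes "\<alpha> > 0" and "\<alpha> * (norm x)\<^sup>2 \<le> q"
  shows "norm x \<le> sqrt q / sqrt \<alpha>"
proof -
  have "norm x \<le> sqrt (q / \<alpha>)"
    using assms by (intro real_le_rsqrt) (simp add: field_simps)
  then show ?thesis by (simp add: real_sqrt_divide)
qed

theorem lemma3p7:
  fixes M S L :: "'a::{real_inner,complete_space} \<Rightarrow> 'a \<Rightarrow> 'a"
    and \<Phi> :: 'a
    and \<alpha>M \<beta>S :: real
  assumes L_def: "\<And>\<Psi>. L \<Phi> \<Psi> = M \<Phi> \<Psi> + S \<Phi> \<Psi>"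
    and S_lin: "linear (S \<Phi>)"
    and S_skew: "\<And>x y. inner (S \<Phi> x) y = - inner x (S \<Phi> y)"
    and M_lin: "linear (M \<Phi>)"
    and M_sym: "\<And>x y. inner (M \<Phi> x) y = inner x (M \<Phi> y)"
    and M_posdef: "\<And>x. x \<noteq> 0 \<Longrightarrow> inner (- M \<Phi> x) x > 0"
    and \<alpha>_pos: "\<alpha>M > 0" and \<beta>_pos: "\<beta>S > 0"
    and S_bound: "\<And>\<Psi>1 \<Psi>2. inner (S \<Phi> \<Psi>1) \<Psi>2 \<le> \<beta>S * norm \<Psi>1 * norm \<Psi>2"
    and M_coercive: "\<And>\<Psi>. inner (- M \<Phi> \<Psi>) \<Psi> \<ge> \<alpha>M * (norm \<Psi>)\<^sup>2"
  shows "\<forall>\<Psi>1 \<Psi>2. inner (L \<Phi> \<Psi>1) \<Psi>2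
           \<le> (1 + \<beta>S / \<alpha>M) * sqrt (inner \<Psi>1 (- M \<Phi> \<Psi>1)) * sqrt (inner \<Psi>2 (- M \<Phi> \<Psi>2))"
proof (intro allI)
  fix x y :: 'a
  define E where "E z = sqrt (inner z (- M \<Phi> z))" for z
  have "linear (\<lambda>z. - M \<Phi> z)" using M_lin by (rule linear_compose_neg)
  then have "\<bar>inner (- M \<Phi> x) y\<bar> \<le> E x * E y"
    using abs_inner_operator_le_sqrt[of "\<lambda>z. - M \<Phi> z"] M_sym M_posdef
    by (simp add: E_def inner_commute)
  then have M_part: "inner (M \<Phi> x) y \<le> E x * E y" by simp
  have "norm z \<le> E z / sqrt \<alpha>M" for z
    using norm_le_sqrt_coercive[OF \<alpha>_pos M_coercive] by (simp add: E_def inner_commute)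
  then have "norm x * norm y \<le> (E x / sqrt \<alpha>M) * (E y / sqrt \<alpha>M)"
    by (meson mult_mono norm_ge_zero order_trans)
  also have "\<dots> = E x * E y / \<alpha>M"
    using \<alpha>_pos by simp
  finally have "norm x * norm y \<le> E x * E y / \<alpha>M" .
  then have S_part: "inner (S \<Phi> x) y \<le> \<beta>S / \<alpha>M * (E x * E y)"
    using S_bound[of x y] \<beta>_pos mult_left_mono[of _ _ \<beta>S] by (fastforce simp: mult.assoc)
  have "inner (L \<Phi> x) y = inner (M \<Phi> x) y + inner (S \<Phi> x) y"
    by (simp add: L_def inner_add_left)
  also have "\<dots> \<le> (1 + \<beta>S / \<alpha>M) * (E x * E y)"
    using M_part S_part by (simp add: distrib_right)
  finally show "inner (L \<Phi> x) y \<le> (1 + \<beta>S / \<alpha>M) * E x * E y"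
    by (simp add: mult.assoc)
qed

end
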